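(* Let $\mathfrak{X}$ be a Bourgain–Delbaen space determined by $(\Gamma_q,i_q)_q$ and let $\Gamma'$ be a self-determined subset of $\Gamma$. Write $\{q:\Gamma'\cap\Delta_q\neq\varnothing\}=\{q_0<q_1<q_2<\cdots\}$, $\Gamma'_{q}=\Gamma'\cap\Gamma_q$, let $R$ denote restriction onto $\Gamma'$, and for each $s$ define $i'_{q_s}:\ell_\infty(\Gamma'_{q_s})\to\ell_\infty(\Gamma')$ by $i'_{q_s}(x)=R(i_{q_s}(x))$, where $x$ is identified with a vector in $\ell_\infty(\Gamma_{q_s})$ vanishing off $\Gamma'_{q_s}$. Then $(i'_{q_s})_s$ is a compatible sequence of extension operators with $\sup_s\|i'_{q_s}\|\leqslant\sup_q\|i_q\|$; hence $(\Gamma'_{q_s},i'_{q_s})_s$ defines a Bourgain–Delbaen space $\mathfrak{X}_{(\Gamma'_{q_s},i'_{q_s})_s}$.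
   Context: Bourgain–Delbaen spaces: given a strictly increasing sequence $(\Gamma_q)_q$ of non-empty finite sets with union $\Gamma$ and linear extension operators $i_q:\ell_\infty(\Gamma_q)\to\ell_\infty(\Gamma)$ ($i_q(x)|_{\Gamma_q}=x$) with $\sup_q\|i_q\|<\infty$ that are compatible (for $p<q$, $i_p=i_q\circ r_q\circ i_p$, with $r_q$ restriction onto $\Gamma_q$), set $\Delta_1=\Gamma_1$, $\Delta_{q+1}=\Gamma_{q+1}\setminus\Gamma_q$, $d_\gamma=i_q(e_\gamma)$ for $\gamma\in\Delta_q$; the Bourgain–Delbaen space $\mathfrak{X}_{(\Gamma_q,i_q)_q}$ is the closed span of $\{d_\gamma\}$ in $\ell_\infty(\Gamma)$. $e_\gamma^*$ denotes evaluation at $\gamma$ restricted to the space, $(d_\gamma^* )$ the functionals biorthogonal to $(d_\gamma)$. An infinite subset $\Gamma'\subseteq\Gamma$ is self-determined if each $d_\gamma^*$, $\gamma\in\Gamma'$, lies in the linear span of $\{e_\eta^*:\eta\in\Gamma'\}$. *)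

theory Defs
  imports Complex_Main "HOL-Library.Infinite_Set"
begin

text \<open>Elements of \<open>\<ell>\<^sub>\<infinity>(A)\<close>, for \<open>A \<subseteq> 'a\<close>, are represented as real functions on the
  ambient type that are bounded and vanish off \<open>A\<close>.\<close>

definition supported_on :: "'a set \<Rightarrow> ('a \<Rightarrow> real) \<Rightarrow> bool" where
  "supported_on A x \<longleftrightarrow> (\<forall>\<eta>. \<eta> \<notin> A \<longrightarrow> x \<eta> = 0)"

definition bdd_fun :: "('a \<Rightarrow> real) \<Rightarrow> bool" where
  "bdd_fun f \<longleftrightarrow> bdd_above (range (\<lambda>\<eta>. \<bar>f \<eta>\<bar>))"

definition supn :: "('a \<Rightarrow> real) \<Rightarrow> real" where
  "supn f = (SUP \<eta>. \<bar>f \<eta>\<bar>)"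

definition opn :: "'a set \<Rightarrow> (('a \<Rightarrow> real) \<Rightarrow> ('a \<Rightarrow> real)) \<Rightarrow> real" where
  "opn A T = Sup ((\<lambda>x. supn (T x)) ` {x. supported_on A x \<and> supn x \<le> 1})"

definition restr :: "'a set \<Rightarrow> ('a \<Rightarrow> real) \<Rightarrow> ('a \<Rightarrow> real)" where
  "restr A f = (\<lambda>\<eta>. if \<eta> \<in> A then f \<eta> else 0)"

text \<open>Bourgain--Delbaen data \<open>(\<Gamma>\<^sub>q, i\<^sub>q)\<^sub>q\<close> over the ground set \<open>G = \<Union>\<^sub>q \<Gamma>\<^sub>q\<close>
  (indexing starts at 0): strictly increasing non-empty finite sets, linear extension
  operators \<open>\<ell>\<^sub>\<infinity>(\<Gamma>\<^sub>q) \<rightarrow> \<ell>\<^sub>\<infinity>(G)\<close>, compatible, uniformly bounded in norm.\<close>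
definition BD_system :: "'a set \<Rightarrow> (nat \<Rightarrow> 'a set) \<Rightarrow> (nat \<Rightarrow> ('a \<Rightarrow> real) \<Rightarrow> ('a \<Rightarrow> real)) \<Rightarrow> bool" where
  "BD_system G Gam i \<longleftrightarrow>
     (\<forall>q. finite (Gam q) \<and> Gam q \<noteq> {}) \<and>
     (\<forall>q. Gam q \<subset> Gam (Suc q)) \<and>
     (\<Union>q. Gam q) = G \<and>
     (\<forall>q x y. supported_on (Gam q) x \<longrightarrow> supported_on (Gam q) y \<longrightarrow>
        i q (\<lambda>\<eta>. x \<eta> + y \<eta>) = (\<lambda>\<eta>. i q x \<eta> + i q y \<eta>)) \<and>
     (\<forall>q x c. supported_on (Gam q) x \<longrightarrow> i q (\<lambda>\<eta>. c * x \<eta>) = (\<lambda>\<eta>. c * i q x \<eta>)) \<and>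
     (\<forall>q x. supported_on (Gam q) x \<longrightarrow>
        supported_on G (i q x) \<and> bdd_fun (i q x) \<and> (\<forall>\<eta>\<in>Gam q. i q x \<eta> = x \<eta>)) \<and>
     (\<forall>p q x. p < q \<longrightarrow> supported_on (Gam p) x \<longrightarrow> i p x = i q (restr (Gam q) (i p x))) \<and>
     bdd_above (range (\<lambda>q. opn (Gam q) (i q)))"

definition Delta :: "(nat \<Rightarrow> 'a set) \<Rightarrow> nat \<Rightarrow> 'a set" where
  "Delta Gam q = (if q = 0 then Gam 0 else Gam q - Gam (q - 1))"

definition unitv :: "'a \<Rightarrow> ('a \<Rightarrow> real)" where
  "unitv \<gamma> = (\<lambda>\<eta>. if \<eta> = \<gamma> then 1 else 0)"

definition dvec :: "(nat \<Rightarrow> 'a set) \<Rightarrow> (nat \<Rightarrow> ('a \<Rightarrow> real) \<Rightarrow> ('a \<Rightarrow> real)) \<Rightarrow> 'a \<Rightarrow> ('a \<Rightarrow> real)" where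
  "dvec Gam i \<gamma> = i (THE q. \<gamma> \<in> Delta Gam q) (unitv \<gamma>)"

text \<open>The Bourgain--Delbaen space: closed linear span of the \<open>d\<^sub>\<gamma>\<close> in \<open>\<ell>\<^sub>\<infinity>(G)\<close>.\<close>
definition BD_space :: "'a set \<Rightarrow> (nat \<Rightarrow> 'a set) \<Rightarrow> (nat \<Rightarrow> ('a \<Rightarrow> real) \<Rightarrow> ('a \<Rightarrow> real)) \<Rightarrow> ('a \<Rightarrow> real) set" where
  "BD_space G Gam i = {f. supported_on G f \<and> bdd_fun f \<and>
     (\<forall>\<epsilon>>0. \<exists>F c. finite F \<and> F \<subseteq> G \<and>
        (\<forall>\<eta>. \<bar>f \<eta> - (\<Sum>\<gamma>\<in>F. c \<gamma> * dvec Gam i \<gamma> \<eta>)\<bar> \<le> \<epsilon>))}"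

text \<open>\<open>d\<^sup>*\<^sub>\<gamma>\<close>: the bounded linear functional on the space biorthogonal to \<open>(d\<^sub>\<delta>)\<close>
  (it is unique since the span of the \<open>d\<^sub>\<delta>\<close> is dense).\<close>
definition dstar :: "'a set \<Rightarrow> (nat \<Rightarrow> 'a set) \<Rightarrow> (nat \<Rightarrow> ('a \<Rightarrow> real) \<Rightarrow> ('a \<Rightarrow> real)) \<Rightarrow> 'a \<Rightarrow> (('a \<Rightarrow> real) \<Rightarrow> real)" where
  "dstar G Gam i \<gamma> = (SOME \<phi>.
     (\<forall>x\<in>BD_space G Gam i. \<forall>y\<in>BD_space G Gam i. \<phi> (\<lambda>\<eta>. x \<eta> + y \<eta>) = \<phi> x + \<phi> y) \<and>
     (\<forall>x\<in>BD_space G Gam i. \<forall>c. \<phi> (\<lambda>\<eta>. c * x \<eta>) = c * \<phi> x) \<and>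
     (\<exists>K. \<forall>x\<in>BD_space G Gam i. \<bar>\<phi> x\<bar> \<le> K * supn x) \<and>
     (\<forall>\<delta>\<in>G. \<phi> (dvec Gam i \<delta>) = (if \<delta> = \<gamma> then 1 else 0)))"

definition self_determined :: "'a set \<Rightarrow> (nat \<Rightarrow> 'a set) \<Rightarrow> (nat \<Rightarrow> ('a \<Rightarrow> real) \<Rightarrow> ('a \<Rightarrow> real)) \<Rightarrow> 'a set \<Rightarrow> bool" where
  "self_determined G Gam i G' \<longleftrightarrow> G' \<subseteq> G \<and> infinite G' \<and>
     (\<forall>\<gamma>\<in>G'. \<exists>F c. finite F \<and> F \<subseteq> G' \<and>
        (\<forall>x\<in>BD_space G Gam i. dstar G Gam i \<gamma> x = (\<Sum>\<eta>\<in>F. c \<eta> * x \<eta>)))"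

end

theory Submission
  imports Defs
begin

text \<open>Restricting the extension operators to \<open>\<Gamma>'\<close> trivially preserves linearity, the
  extension property and the norm bound; the real point is compatibility, which needs
  \<open>R(i\<^sub>q x)\<close> to depend only on \<open>R x\<close>. The matrix \<open>(d\<^sub>\<delta>(\<zeta>))\<close> is unitriangular with respect
  to levels, so writing \<open>d\<^sup>*\<^sub>\<eta>\<close> (\<open>\<eta> \<in> \<Gamma>'\<close>) as a combination of evaluations at points of \<open>\<Gamma>'\<close>
  shows, by induction on the level of \<open>\<eta>\<close>, that \<open>d\<^sub>\<delta>(\<eta>) = 0\<close> whenever \<open>\<delta> \<notin> \<Gamma>'\<close>.
  Expanding \<open>d\<^sub>\<gamma> = i\<^sub>q(r\<^sub>q d\<^sub>\<gamma>)\<close> then gives, by downward induction on the level of \<open>\<gamma>\<close>,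
  that \<open>i\<^sub>q(e\<^sub>\<gamma>)\<close> vanishes on \<open>\<Gamma>'\<close> for \<open>\<gamma> \<in> \<Gamma>\<^sub>q \<setminus> \<Gamma>'\<close>.\<close>

lemma supported_on_restr: "supported_on A (restr A x)"
  unfolding supported_on_def restr_def by auto

lemma supported_on_unitv: "\<gamma> \<in> A \<Longrightarrow> supported_on A (unitv \<gamma>)"
  unfolding supported_on_def unitv_def by auto

lemma supported_on_mono: "supported_on A x \<Longrightarrow> A \<subseteq> B \<Longrightarrow> supported_on B x"
  unfolding supported_on_def by auto

lemma abs_le_supn: "bdd_fun x \<Longrightarrow> \<bar>x \<eta>\<bar> \<le> supn x"
  unfolding bdd_fun_def supn_def by (auto intro: cSUP_upper)

lemma bdd_fun_restr: "bdd_fun x \<Longrightarrow> bdd_fun (restr A x)"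
  unfolding bdd_fun_def bdd_above_def restr_def by (force intro: order_trans[OF _ abs_ge_zero])

lemma supn_restr_le:
  assumes "bdd_fun x" shows "supn (restr A x) \<le> supn x"
proof -
  have "\<bar>restr A x \<eta>\<bar> \<le> supn x" for \<eta>
    using abs_le_supn[OF assms, of \<eta>] unfolding restr_def by auto
  then show ?thesis unfolding supn_def[of "restr A x"] by (intro cSUP_least) auto
qed

lemma bdd_fun_finite_support: "finite A \<Longrightarrow> supported_on A x \<Longrightarrow> bdd_fun x"
proof -
  assume "finite A" "supported_on A x"
  then have "range (\<lambda>\<eta>. \<bar>x \<eta>\<bar>) \<subseteq> insert 0 ((\<lambda>\<eta>. \<bar>x \<eta>\<bar>) ` A)"
    unfolding supported_on_def by auto
  with \<open>finite A\<close> show ?thesis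
    unfolding bdd_fun_def by (meson bdd_above_mono finite_imageI finite_insert bdd_above_finite)
qed

lemma opn_mono:
  assumes "A \<subseteq> B"
    and "\<And>x. supported_on A x \<Longrightarrow> supn x \<le> 1 \<Longrightarrow> supn (S x) \<le> supn (T x)"
    and "bdd_above ((\<lambda>x. supn (T x)) ` {x. supported_on B x \<and> supn x \<le> 1})"
  shows "opn A S \<le> opn B T"
  unfolding opn_def
proof (rule cSup_mono)
  have "supported_on A (\<lambda>_. 0)" "supn (\<lambda>_::'a. 0::real) \<le> 1"
    unfolding supported_on_def supn_def by auto
  then show "(\<lambda>x. supn (S x)) ` {x. supported_on A x \<and> supn x \<le> 1} \<noteq> {}"
    by blast
next
  fix b assume "b \<in> (\<lambda>x. supn (S x)) ` {x. supported_on A x \<and> supn x \<le> 1}"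
  then show "\<exists>a\<in>(\<lambda>x. supn (T x)) ` {x. supported_on B x \<and> supn x \<le> 1}. b \<le> a"
    using assms(1,2) supported_on_mono by blast
qed (fact assms(3))

locale bourgain_delbaen =
  fixes G :: "'a set" and Gam :: "nat \<Rightarrow> 'a set"
    and i :: "nat \<Rightarrow> ('a \<Rightarrow> real) \<Rightarrow> ('a \<Rightarrow> real)"
  assumes BD_system: "BD_system G Gam i"
begin

lemma finite_Gam: "finite (Gam q)"
  and Gam_psubset_Suc: "Gam q \<subset> Gam (Suc q)"
  and UN_Gam: "(\<Union>q. Gam q) = G"
  and ext_add: "supported_on (Gam q) x \<Longrightarrow> supported_on (Gam q) y \<Longrightarrow>
     i q (\<lambda>\<eta>. x \<eta> + y \<eta>) = (\<lambda>\<eta>. i q x \<eta> + i q y \<eta>)"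
  and ext_scale: "supported_on (Gam q) x \<Longrightarrow> i q (\<lambda>\<eta>. c * x \<eta>) = (\<lambda>\<eta>. c * i q x \<eta>)"
  and ext_supported: "supported_on (Gam q) x \<Longrightarrow> supported_on G (i q x)"
  and ext_bdd: "supported_on (Gam q) x \<Longrightarrow> bdd_fun (i q x)"
  and ext_extends: "supported_on (Gam q) x \<Longrightarrow> \<eta> \<in> Gam q \<Longrightarrow> i q x \<eta> = x \<eta>"
  and ext_compat: "p < q \<Longrightarrow> supported_on (Gam p) x \<Longrightarrow> i p x = i q (restr (Gam q) (i p x))"
  and bdd_above_opn_ext: "bdd_above (range (\<lambda>q. opn (Gam q) (i q)))"
  using BD_system unfolding BD_system_def by (elim conjE; simp; fail)+

lemma Gam_mono: "p \<le> q \<Longrightarrow> Gam p \<subseteq> Gam q"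
  using lift_Suc_mono_le[of Gam] Gam_psubset_Suc by (metis psubset_imp_subset)

lemma Gam_subset: "Gam q \<subseteq> G"
  using UN_Gam by blast

definition level :: "'a \<Rightarrow> nat" where
  "level \<gamma> = (LEAST q. \<gamma> \<in> Gam q)"

lemma mem_Gam_level: "\<gamma> \<in> G \<Longrightarrow> \<gamma> \<in> Gam (level \<gamma>)"
  unfolding level_def using UN_Gam by (metis (mono_tags, lifting) LeastI_ex UN_iff)

lemma mem_Gam_iff_level_le: "\<gamma> \<in> G \<Longrightarrow> \<gamma> \<in> Gam q \<longleftrightarrow> level \<gamma> \<le> q"
  using mem_Gam_level Gam_mono unfolding level_def by (meson Least_le subsetD)

lemma Delta_iff_level: "\<gamma> \<in> Delta Gam q \<longleftrightarrow> \<gamma> \<in> G \<and> level \<gamma> = q"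
proof
  assume \<gamma>: "\<gamma> \<in> Delta Gam q"
  then have "\<gamma> \<in> G"
    using Gam_subset unfolding Delta_def by (auto split: if_splits)
  with \<gamma> show "\<gamma> \<in> G \<and> level \<gamma> = q"
    using mem_Gam_iff_level_le[of \<gamma> q] mem_Gam_iff_level_le[of \<gamma> "q - 1"]
    unfolding Delta_def by (cases "q = 0") auto
next
  assume "\<gamma> \<in> G \<and> level \<gamma> = q"
  then show "\<gamma> \<in> Delta Gam q"
    using mem_Gam_iff_level_le[of \<gamma> q] mem_Gam_iff_level_le[of \<gamma> "q - 1"]
    unfolding Delta_def by auto
qed

lemma dvec_eq: "\<gamma> \<in> G \<Longrightarrow> dvec Gam i \<gamma> = i (level \<gamma>) (unitv \<gamma>)"
  unfolding dvec_def using Delta_iff_level by (metis (mono_tags, lifting) the_equality)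

lemma dvec_eq_unitv: "\<gamma> \<in> G \<Longrightarrow> \<zeta> \<in> Gam (level \<gamma>) \<Longrightarrow> dvec Gam i \<gamma> \<zeta> = unitv \<gamma> \<zeta>"
  using dvec_eq ext_extends supported_on_unitv mem_Gam_level by metis

lemma dvec_self: "\<gamma> \<in> G \<Longrightarrow> dvec Gam i \<gamma> \<gamma> = 1"
  using dvec_eq_unitv mem_Gam_level unfolding unitv_def by auto

lemma dvec_eq_0_if_level_le:
  "\<gamma> \<in> G \<Longrightarrow> \<zeta> \<in> G \<Longrightarrow> \<zeta> \<noteq> \<gamma> \<Longrightarrow> level \<zeta> \<le> level \<gamma> \<Longrightarrow> dvec Gam i \<gamma> \<zeta> = 0"
  using dvec_eq_unitv mem_Gam_iff_level_le unfolding unitv_def by auto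

lemma dvec_in_BD_space: "\<gamma> \<in> G \<Longrightarrow> dvec Gam i \<gamma> \<in> BD_space G Gam i"
proof -
  assume \<gamma>: "\<gamma> \<in> G"
  then have "supported_on (Gam (level \<gamma>)) (unitv \<gamma>)"
    by (intro supported_on_unitv mem_Gam_level)
  with \<gamma> have "supported_on G (dvec Gam i \<gamma>)" "bdd_fun (dvec Gam i \<gamma>)"
    using dvec_eq ext_supported ext_bdd by auto
  moreover have "\<exists>F c. finite F \<and> F \<subseteq> G \<and>
      (\<forall>\<eta>. \<bar>dvec Gam i \<gamma> \<eta> - (\<Sum>\<delta>\<in>F. c \<delta> * dvec Gam i \<delta> \<eta>)\<bar> \<le> \<epsilon>)" if "\<epsilon> > 0" for \<epsilon>
    using \<gamma> that by (intro exI[of _ "{\<gamma>}"] exI[of _ "\<lambda>_. 1"]) simp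
  ultimately show ?thesis unfolding BD_space_def by blast
qed

lemma ext_zero: "i q (\<lambda>_. 0) = (\<lambda>_. 0)"
  using ext_scale[of q "\<lambda>_. 0" 0] unfolding supported_on_def by simp

lemma ext_sum_unitv:
  "finite A \<Longrightarrow> A \<subseteq> Gam q \<Longrightarrow>
   i q (\<lambda>\<eta>. \<Sum>\<zeta>\<in>A. x \<zeta> * unitv \<zeta> \<eta>) = (\<lambda>\<eta>. \<Sum>\<zeta>\<in>A. x \<zeta> * i q (unitv \<zeta>) \<eta>)"
proof (induction A rule: finite_induct)
  case empty
  then show ?case using ext_zero by simp
next
  case (insert a A)
  have "supported_on (Gam q) (\<lambda>\<eta>. x a * unitv a \<eta>)"
    "supported_on (Gam q) (\<lambda>\<eta>. \<Sum>\<zeta>\<in>A. x \<zeta> * unitv \<zeta> \<eta>)"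
    using insert.prems unfolding supported_on_def unitv_def by (auto intro!: sum.neutral)
  then show ?case
    using insert ext_add ext_scale[OF supported_on_unitv, of a q "x a"] by simp
qed

lemma ext_expansion:
  assumes "supported_on (Gam q) x"
  shows "i q x \<eta> = (\<Sum>\<zeta>\<in>Gam q. x \<zeta> * i q (unitv \<zeta>) \<eta>)"
proof -
  have "x = (\<lambda>\<eta>. \<Sum>\<zeta>\<in>Gam q. x \<zeta> * unitv \<zeta> \<eta>)"
  proof
    fix \<eta>
    have "(\<Sum>\<zeta>\<in>Gam q. x \<zeta> * unitv \<zeta> \<eta>) = (\<Sum>\<zeta>\<in>Gam q. if \<zeta> = \<eta> then x \<eta> else 0)"
      unfolding unitv_def by (intro sum.cong) auto
    then show "x \<eta> = (\<Sum>\<zeta>\<in>Gam q. x \<zeta> * unitv \<zeta> \<eta>)"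
      using assms finite_Gam unfolding supported_on_def by (auto simp: sum.delta')
  qed
  then show ?thesis
    using ext_sum_unitv[OF finite_Gam order_refl] by metis
qed

lemma abs_ext_le:
  assumes x: "supported_on (Gam q) x"
  shows "\<bar>i q x \<eta>\<bar> \<le> supn x * (\<Sum>\<zeta>\<in>Gam q. \<bar>i q (unitv \<zeta>) \<eta>\<bar>)"
proof -
  have bdd: "bdd_fun x"
    using bdd_fun_finite_support[OF finite_Gam x] .
  have "\<bar>i q x \<eta>\<bar> = \<bar>\<Sum>\<zeta>\<in>Gam q. x \<zeta> * i q (unitv \<zeta>) \<eta>\<bar>"
    using ext_expansion[OF x] by simp
  also have "\<dots> \<le> (\<Sum>\<zeta>\<in>Gam q. \<bar>x \<zeta>\<bar> * \<bar>i q (unitv \<zeta>) \<eta>\<bar>)"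
    by (rule order_trans[OF sum_abs]) (simp add: abs_mult)
  also have "\<dots> \<le> (\<Sum>\<zeta>\<in>Gam q. supn x * \<bar>i q (unitv \<zeta>) \<eta>\<bar>)"
    by (intro sum_mono mult_right_mono abs_le_supn[OF bdd]) auto
  finally show ?thesis
    by (simp add: sum_distrib_left)
qed

text \<open>The formula \<open>d\<^sup>*\<^sub>\<gamma> = e\<^sup>*\<^sub>\<gamma> - e\<^sup>*\<^sub>\<gamma> \<circ> i\<^sub>q\<^sub>-\<^sub>1 \<circ> r\<^sub>q\<^sub>-\<^sub>1\<close> for \<open>\<gamma> \<in> \<Delta>\<^sub>q\<close>; it is an explicit
  witness for the choice in the definition of \<open>dstar\<close>.\<close>
definition coord :: "'a \<Rightarrow> ('a \<Rightarrow> real) \<Rightarrow> real" where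
  "coord \<gamma> x = x \<gamma> -
     (if level \<gamma> = 0 then 0 else i (level \<gamma> - 1) (restr (Gam (level \<gamma> - 1)) x) \<gamma>)"

lemma coord_add: "coord \<gamma> (\<lambda>\<eta>. x \<eta> + y \<eta>) = coord \<gamma> x + coord \<gamma> y"
proof -
  have "restr A (\<lambda>\<eta>. x \<eta> + y \<eta>) = (\<lambda>\<eta>. restr A x \<eta> + restr A y \<eta>)" for A
    unfolding restr_def by auto
  then show ?thesis
    unfolding coord_def using ext_add[OF supported_on_restr supported_on_restr] by simp
qed

lemma coord_scale: "coord \<gamma> (\<lambda>\<eta>. c * x \<eta>) = c * coord \<gamma> x"
proof -
  have "restr A (\<lambda>\<eta>. c * x \<eta>) = (\<lambda>\<eta>. c * restr A x \<eta>)" for A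
    unfolding restr_def by auto
  then show ?thesis
    unfolding coord_def using ext_scale[OF supported_on_restr] by (simp add: algebra_simps)
qed

lemma coord_bounded: "\<exists>K. \<forall>x. bdd_fun x \<longrightarrow> \<bar>coord \<gamma> x\<bar> \<le> K * supn x"
proof (intro exI allI impI)
  define p where "p = level \<gamma> - 1"
  fix x :: "'a \<Rightarrow> real" assume x: "bdd_fun x"
  have "\<bar>i p (restr (Gam p) x) \<gamma>\<bar> \<le> supn (restr (Gam p) x) * (\<Sum>\<zeta>\<in>Gam p. \<bar>i p (unitv \<zeta>) \<gamma>\<bar>)"
    by (rule abs_ext_le[OF supported_on_restr])
  also have "\<dots> \<le> supn x * (\<Sum>\<zeta>\<in>Gam p. \<bar>i p (unitv \<zeta>) \<gamma>\<bar>)"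
    by (intro mult_right_mono supn_restr_le[OF x] sum_nonneg) auto
  finally show "\<bar>coord \<gamma> x\<bar> \<le> (1 + (\<Sum>\<zeta>\<in>Gam p. \<bar>i p (unitv \<zeta>) \<gamma>\<bar>)) * supn x"
    using abs_le_supn[OF x, of \<gamma>] unfolding coord_def p_def[symmetric]
    by (auto simp: algebra_simps)
qed

lemma restr_dvec_below_level:
  assumes "\<delta> \<in> G" "p < level \<delta>"
  shows "restr (Gam p) (dvec Gam i \<delta>) = (\<lambda>_. 0)"
proof
  fix \<zeta>
  show "restr (Gam p) (dvec Gam i \<delta>) \<zeta> = 0"
  proof (cases "\<zeta> \<in> Gam p")
    case True
    then have "\<zeta> \<in> Gam (level \<delta>)" "\<zeta> \<noteq> \<delta>"
      using assms Gam_mono[of p "level \<delta>"] mem_Gam_iff_level_le[of \<delta> p] by auto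
    then show ?thesis
      using assms(1) dvec_eq_unitv unfolding restr_def unitv_def by auto
  qed (simp add: restr_def)
qed

lemma ext_restr_dvec:
  assumes \<delta>: "\<delta> \<in> G" and "level \<delta> \<le> p"
  shows "i p (restr (Gam p) (dvec Gam i \<delta>)) = dvec Gam i \<delta>"
proof (cases "level \<delta> = p")
  case True
  have "supported_on (Gam p) (unitv \<delta>)"
    using supported_on_unitv[OF mem_Gam_level[OF \<delta>]] True by simp
  then have "restr (Gam p) (dvec Gam i \<delta>) = unitv \<delta>"
    using True \<delta> dvec_eq_unitv unfolding restr_def supported_on_def by auto
  then show ?thesis
    using True dvec_eq[OF \<delta>] by simp
next
  case False
  then show ?thesis
    using assms ext_compat[of "level \<delta>" p "unitv \<delta>"] dvec_eq[OF \<delta>]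
      supported_on_unitv[OF mem_Gam_level] by simp
qed

lemma coord_dvec:
  assumes \<gamma>: "\<gamma> \<in> G" and \<delta>: "\<delta> \<in> G"
  shows "coord \<gamma> (dvec Gam i \<delta>) = (if \<delta> = \<gamma> then 1 else 0)"
proof (cases "level \<gamma> \<le> level \<delta>")
  case True
  have "\<gamma> \<in> Gam (level \<delta>)"
    using True Gam_mono mem_Gam_level[OF \<gamma>] by blast
  then have "dvec Gam i \<delta> \<gamma> = (if \<delta> = \<gamma> then 1 else 0)"
    using \<delta> dvec_eq_unitv unfolding unitv_def by auto
  moreover have "restr (Gam (level \<gamma> - 1)) (dvec Gam i \<delta>) = (\<lambda>_. 0)" if "level \<gamma> > 0"
    using True that \<delta> by (intro restr_dvec_below_level) auto
  ultimately show ?thesis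
    unfolding coord_def using ext_zero by auto
next
  case False
  then have "\<delta> \<noteq> \<gamma>" "level \<gamma> \<noteq> 0" by auto
  with False show ?thesis
    unfolding coord_def using ext_restr_dvec[OF \<delta>, of "level \<gamma> - 1"] by simp
qed

lemma dstar_dvec:
  assumes "\<gamma> \<in> G" "\<delta> \<in> G"
  shows "dstar G Gam i \<gamma> (dvec Gam i \<delta>) = (if \<delta> = \<gamma> then 1 else 0)"
proof -
  let ?X = "BD_space G Gam i"
  let ?P = "\<lambda>\<phi>. (\<forall>x\<in>?X. \<forall>y\<in>?X. \<phi> (\<lambda>\<eta>. x \<eta> + y \<eta>) = \<phi> x + \<phi> y) \<and>
     (\<forall>x\<in>?X. \<forall>c. \<phi> (\<lambda>\<eta>. c * x \<eta>) = c * \<phi> x) \<and>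
     (\<exists>K. \<forall>x\<in>?X. \<bar>\<phi> x\<bar> \<le> K * supn x) \<and>
     (\<forall>\<delta>\<in>G. \<phi> (dvec Gam i \<delta>) = (if \<delta> = \<gamma> then 1 else 0))"
  obtain K where "\<forall>x. bdd_fun x \<longrightarrow> \<bar>coord \<gamma> x\<bar> \<le> K * supn x"
    using coord_bounded by blast
  then have "\<exists>K. \<forall>x\<in>?X. \<bar>coord \<gamma> x\<bar> \<le> K * supn x"
    unfolding BD_space_def by blast
  then have "?P (coord \<gamma>)"
    using coord_add coord_scale coord_dvec[OF assms(1)] by simp
  then have "?P (SOME \<phi>. ?P \<phi>)"
    by (rule someI[of ?P "coord \<gamma>"])
  then have "\<forall>\<delta>\<in>G. dstar G Gam i \<gamma> (dvec Gam i \<delta>) = (if \<delta> = \<gamma> then 1 else 0)"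
    unfolding dstar_def by (elim conjE)
  with assms(2) show ?thesis by blast
qed

lemma self_determined_relation:
  assumes sd: "self_determined G Gam i G'" and \<eta>: "\<eta> \<in> G'"
  obtains F c where "finite F" "F \<subseteq> G'"
    "\<And>\<delta>. \<delta> \<in> G \<Longrightarrow> (\<Sum>\<zeta>\<in>F. c \<zeta> * dvec Gam i \<delta> \<zeta>) = (if \<delta> = \<eta> then 1 else 0)"
proof -
  obtain F c where F: "finite F" "F \<subseteq> G'"
    and dstar: "\<forall>x\<in>BD_space G Gam i. dstar G Gam i \<eta> x = (\<Sum>\<zeta>\<in>F. c \<zeta> * x \<zeta>)"
    using sd \<eta> unfolding self_determined_def by blast
  have \<eta>G: "\<eta> \<in> G"
    using sd \<eta> unfolding self_determined_def by blast
  have "(\<Sum>\<zeta>\<in>F. c \<zeta> * dvec Gam i \<delta> \<zeta>) = (if \<delta> = \<eta> then 1 else 0)" if "\<delta> \<in> G" for \<delta>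
    using dstar dvec_in_BD_space[OF that] dstar_dvec[OF \<eta>G that] by simp
  with F that show ?thesis by blast
qed

text \<open>Since the matrix \<open>(d\<^sub>\<delta>(\<zeta>))\<close> is unitriangular with respect to levels, a relation
  \<open>\<Sum>\<^sub>\<zeta> c\<^sub>\<zeta> e\<^sup>*\<^sub>\<zeta> = d\<^sup>*\<^sub>\<eta>\<close> determines the coefficients at all levels \<open>\<ge> level \<eta>\<close>; test it
  against \<open>d\<^sub>z\<close> for a wrong coefficient \<open>c\<^sub>z\<close> of maximal level.\<close>
lemma relation_coefficients_above_level:
  assumes F: "finite F" "F \<subseteq> G" and \<eta>: "\<eta> \<in> G"
    and rel: "\<And>\<delta>. \<delta> \<in> G \<Longrightarrow> (\<Sum>\<zeta>\<in>F. c \<zeta> * dvec Gam i \<delta> \<zeta>) = (if \<delta> = \<eta> then 1 else 0)"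
    and \<zeta>: "\<zeta> \<in> F" "level \<eta> \<le> level \<zeta>"
  shows "c \<zeta> = (if \<zeta> = \<eta> then 1 else 0)"
proof (rule ccontr)
  define T where "T = {\<zeta>\<in>F. level \<eta> \<le> level \<zeta> \<and> c \<zeta> \<noteq> (if \<zeta> = \<eta> then 1 else 0)}"
  assume "c \<zeta> \<noteq> (if \<zeta> = \<eta> then 1 else 0)"
  with \<zeta> F have T: "finite T" "T \<noteq> {}"
    unfolding T_def by auto
  then have "Max (level ` T) \<in> level ` T"
    by (intro Max_in) auto
  then obtain z where z: "z \<in> T" "level z = Max (level ` T)"
    by (metis imageE)
  have zG: "z \<in> G"
    using z F unfolding T_def by auto
  have "(\<Sum>\<zeta>\<in>F. c \<zeta> * dvec Gam i z \<zeta>) = (\<Sum>\<zeta>\<in>F. if \<zeta> = z then c z else 0)"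
  proof (rule sum.cong)
    fix \<zeta> assume \<zeta>F: "\<zeta> \<in> F"
    show "c \<zeta> * dvec Gam i z \<zeta> = (if \<zeta> = z then c z else 0)"
    proof (cases "level \<zeta> \<le> level z")
      case True
      then show ?thesis
        using \<zeta>F F zG dvec_self dvec_eq_0_if_level_le by auto
    next
      case False
      then have "\<zeta> \<notin> T"
        using Max_ge[OF finite_imageI[OF T(1)], of "level \<zeta>"] z by auto
      moreover have "level \<eta> \<le> level z" "\<zeta> \<noteq> z"
        using z False unfolding T_def by auto
      ultimately show ?thesis
        using \<zeta>F False unfolding T_def by auto
    qed
  qed simp
  also have "\<dots> = c z"
    using F z unfolding T_def by (simp add: sum.delta')
  finally show False
    using rel[OF zG] z unfolding T_def by simp
qed

lemma dvec_vanishes_on_self_determined: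
  assumes sd: "self_determined G Gam i G'"
  shows "\<eta> \<in> G' \<Longrightarrow> \<delta> \<in> G \<Longrightarrow> \<delta> \<notin> G' \<Longrightarrow> dvec Gam i \<delta> \<eta> = 0"
proof (induction "level \<eta>" arbitrary: \<eta> \<delta> rule: less_induct)
  case less
  have G'G: "G' \<subseteq> G"
    using sd unfolding self_determined_def by blast
  obtain F c where F: "finite F" "F \<subseteq> G'"
    and rel: "\<And>\<delta>. \<delta> \<in> G \<Longrightarrow> (\<Sum>\<zeta>\<in>F. c \<zeta> * dvec Gam i \<delta> \<zeta>) = (if \<delta> = \<eta> then 1 else 0)"
    using self_determined_relation[OF sd less.prems(1)] by blast
  have \<eta>G: "\<eta> \<in> G" and FG: "F \<subseteq> G"
    using less.prems(1) F(2) G'G by auto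
  have sum_eq: "(\<Sum>\<zeta>\<in>F. c \<zeta> * dvec Gam i \<delta>' \<zeta>) = (if \<eta> \<in> F then dvec Gam i \<delta>' \<eta> else 0)"
    if low: "\<And>\<zeta>. \<zeta> \<in> F \<Longrightarrow> level \<zeta> < level \<eta> \<Longrightarrow> dvec Gam i \<delta>' \<zeta> = 0" for \<delta>'
  proof -
    have "(\<Sum>\<zeta>\<in>F. c \<zeta> * dvec Gam i \<delta>' \<zeta>) = (\<Sum>\<zeta>\<in>F. if \<zeta> = \<eta> then dvec Gam i \<delta>' \<eta> else 0)"
    proof (rule sum.cong)
      fix \<zeta> assume "\<zeta> \<in> F"
      then show "c \<zeta> * dvec Gam i \<delta>' \<zeta> = (if \<zeta> = \<eta> then dvec Gam i \<delta>' \<eta> else 0)"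
        using low[of \<zeta>] relation_coefficients_above_level[OF F(1) FG \<eta>G rel, of \<zeta>]
        by (cases "level \<zeta> < level \<eta>") auto
    qed simp
    then show ?thesis
      using F(1) by (simp add: sum.delta')
  qed
  have "dvec Gam i \<eta> \<zeta> = 0" if "\<zeta> \<in> F" "level \<zeta> < level \<eta>" for \<zeta>
    using that FG \<eta>G by (intro dvec_eq_0_if_level_le) auto
  then have "\<eta> \<in> F"
    using sum_eq[of \<eta>] rel[OF \<eta>G] by (auto split: if_splits)
  moreover have "dvec Gam i \<delta> \<zeta> = 0" if "\<zeta> \<in> F" "level \<zeta> < level \<eta>" for \<zeta>
    using less.hyps[OF that(2)] that(1) F(2) less.prems(2,3) by blast
  moreover have "\<delta> \<noteq> \<eta>"
    using less.prems by blast
  ultimately show ?case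
    using sum_eq[of \<delta>] rel[OF less.prems(2)] by simp
qed

text \<open>Expand \<open>d\<^sub>\<gamma> = i\<^sub>q(r\<^sub>q d\<^sub>\<gamma>)\<close> in the basis \<open>i\<^sub>q(e\<^sub>\<zeta>)\<close>: apart from \<open>\<zeta> = \<gamma>\<close>, the coefficient
  \<open>d\<^sub>\<gamma>(\<zeta>)\<close> vanishes unless \<open>\<zeta> \<notin> \<Gamma>'\<close> has higher level, where induction applies.\<close>
lemma ext_unitv_vanishes_on_self_determined:
  assumes sd: "self_determined G Gam i G'"
  shows "\<gamma> \<in> Gam q \<Longrightarrow> \<gamma> \<notin> G' \<Longrightarrow> \<eta> \<in> G' \<Longrightarrow> i q (unitv \<gamma>) \<eta> = 0"
proof (induction "q - level \<gamma>" arbitrary: \<gamma> rule: less_induct)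
  case less
  have \<gamma>G: "\<gamma> \<in> G"
    using less.prems(1) Gam_subset by blast
  have \<gamma>q: "level \<gamma> \<le> q"
    using less.prems(1) mem_Gam_iff_level_le[OF \<gamma>G] by blast
  have "dvec Gam i \<gamma> \<eta> = i q (restr (Gam q) (dvec Gam i \<gamma>)) \<eta>"
    using ext_restr_dvec[OF \<gamma>G \<gamma>q] by simp
  also have "\<dots> = (\<Sum>\<zeta>\<in>Gam q. dvec Gam i \<gamma> \<zeta> * i q (unitv \<zeta>) \<eta>)"
    unfolding ext_expansion[OF supported_on_restr] by (simp add: restr_def)
  also have "\<dots> = (\<Sum>\<zeta>\<in>Gam q. if \<zeta> = \<gamma> then i q (unitv \<gamma>) \<eta> else 0)"
  proof (rule sum.cong)
    fix \<zeta> assume \<zeta>: "\<zeta> \<in> Gam q"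
    then have \<zeta>G: "\<zeta> \<in> G" and \<zeta>q: "level \<zeta> \<le> q"
      using Gam_subset mem_Gam_iff_level_le by auto
    show "dvec Gam i \<gamma> \<zeta> * i q (unitv \<zeta>) \<eta> = (if \<zeta> = \<gamma> then i q (unitv \<gamma>) \<eta> else 0)"
    proof (cases "\<zeta> = \<gamma> \<or> level \<zeta> \<le> level \<gamma> \<or> \<zeta> \<in> G'")
      case True
      then show ?thesis
        using \<gamma>G \<zeta>G less.prems dvec_self dvec_eq_0_if_level_le
          dvec_vanishes_on_self_determined[OF sd] by auto
    next
      case False
      then have "q - level \<zeta> < q - level \<gamma>"
        using \<zeta>q by linarith
      with False show ?thesis
        using less.hyps \<zeta> less.prems(3) by simp
    qed
  qed simp
  also have "\<dots> = i q (unitv \<gamma>) \<eta>"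
    using finite_Gam less.prems(1) by (simp add: sum.delta')
  finally show ?case
    using dvec_vanishes_on_self_determined[OF sd less.prems(3) \<gamma>G less.prems(2)] by simp
qed

lemma restr_ext_restr:
  assumes sd: "self_determined G Gam i G'" and x: "supported_on (Gam q) x"
  shows "restr G' (i q x) = restr G' (i q (restr G' x))"
proof
  fix \<eta>
  have x': "supported_on (Gam q) (restr G' x)"
    using x unfolding supported_on_def restr_def by auto
  show "restr G' (i q x) \<eta> = restr G' (i q (restr G' x)) \<eta>"
  proof (cases "\<eta> \<in> G'")
    case True
    have "i q x \<eta> = (\<Sum>\<zeta>\<in>Gam q. x \<zeta> * i q (unitv \<zeta>) \<eta>)"
      by (rule ext_expansion[OF x])
    also have "\<dots> = (\<Sum>\<zeta>\<in>Gam q. restr G' x \<zeta> * i q (unitv \<zeta>) \<eta>)"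
      using ext_unitv_vanishes_on_self_determined[OF sd _ _ True]
      by (intro sum.cong) (auto simp: restr_def)
    also have "\<dots> = i q (restr G' x) \<eta>"
      by (rule ext_expansion[OF x', symmetric])
    finally show ?thesis
      unfolding restr_def using True by simp
  qed (simp add: restr_def)
qed

lemma bdd_above_supn_ext:
  "bdd_above ((\<lambda>x. supn (i q x)) ` {x. supported_on (Gam q) x \<and> supn x \<le> 1})"
proof (rule bdd_aboveI2)
  fix x assume x: "x \<in> {x. supported_on (Gam q) x \<and> supn x \<le> 1}"
  show "supn (i q x) \<le> (\<Sum>\<zeta>\<in>Gam q. supn (i q (unitv \<zeta>)))"
    unfolding supn_def[of "i q x"]
  proof (rule cSUP_least)
    fix \<eta>
    have bdd: "bdd_fun (i q (unitv \<zeta>))" if "\<zeta> \<in> Gam q" for \<zeta>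
      using ext_bdd[OF supported_on_unitv[OF that]] .
    have "\<bar>i q x \<eta>\<bar> \<le> supn x * (\<Sum>\<zeta>\<in>Gam q. \<bar>i q (unitv \<zeta>) \<eta>\<bar>)"
      using x abs_ext_le by blast
    also have "\<dots> \<le> 1 * (\<Sum>\<zeta>\<in>Gam q. supn (i q (unitv \<zeta>)))"
      using x bdd by (intro mult_mono sum_mono sum_nonneg abs_le_supn) auto
    finally show "\<bar>i q x \<eta>\<bar> \<le> (\<Sum>\<zeta>\<in>Gam q. supn (i q (unitv \<zeta>)))"
      by simp
  qed simp
qed

lemma opn_restr_ext_le: "opn (G' \<inter> Gam q) (\<lambda>x. restr G' (i q x)) \<le> opn (Gam q) (i q)"
proof (rule opn_mono)
  fix x assume "supported_on (G' \<inter> Gam q) x"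
  then have "supported_on (Gam q) x"
    by (rule supported_on_mono) blast
  then show "supn (restr G' (i q x)) \<le> supn (i q x)"
    by (intro supn_restr_le ext_bdd)
qed (auto intro: bdd_above_supn_ext)

lemma infinite_levels:
  assumes "G' \<subseteq> G" "infinite G'"
  shows "infinite {q. G' \<inter> Delta Gam q \<noteq> {}}"
proof
  assume "finite {q. G' \<inter> Delta Gam q \<noteq> {}}"
  moreover have "{q. G' \<inter> Delta Gam q \<noteq> {}} = level ` G'"
    using assms(1) Delta_iff_level by auto
  ultimately have "finite (\<Union>q\<in>level ` G'. Gam q)"
    using finite_Gam by (metis finite_UN_I)
  moreover have "G' \<subseteq> (\<Union>q\<in>level ` G'. Gam q)"
    using assms(1) mem_Gam_level by blast
  ultimately show False
    using assms(2) finite_subset by blast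
qed

lemma opn_restr_ext_le_SUP:
  "opn (G' \<inter> Gam q) (\<lambda>x. restr G' (i q x)) \<le> (SUP q. opn (Gam q) (i q))"
  using opn_restr_ext_le cSUP_upper[OF UNIV_I bdd_above_opn_ext] by (rule order_trans)

lemma level_enumeration:
  assumes G': "G' \<subseteq> G" "infinite G'"
  defines "qs \<equiv> enumerate {q. G' \<inter> Delta Gam q \<noteq> {}}"
  shows "strict_mono qs"
    and "G' \<inter> Gam (qs s) \<noteq> {}"
    and "G' \<inter> Gam (qs s) \<subset> G' \<inter> Gam (qs (Suc s))"
    and "(\<Union>s. G' \<inter> Gam (qs s)) = G'"
proof -
  have levels: "infinite {q. G' \<inter> Delta Gam q \<noteq> {}}"
    using G' by (rule infinite_levels)
  show "strict_mono qs"
    unfolding qs_def using enumerate_mono[OF _ levels] by (rule strict_monoI)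
  have new_element: "\<exists>\<eta>\<in>G'. level \<eta> = qs s" for s
    using enumerate_in_set[OF levels, of s] Delta_iff_level unfolding qs_def by auto
  show "G' \<inter> Gam (qs s) \<noteq> {}"
    using new_element[of s] G'(1) mem_Gam_level by force
  obtain \<eta> where "\<eta> \<in> G'" "level \<eta> = qs (Suc s)"
    using new_element by blast
  moreover have "qs s < qs (Suc s)"
    using \<open>strict_mono qs\<close> by (simp add: strict_mono_def)
  ultimately have "\<eta> \<in> G' \<inter> Gam (qs (Suc s)) - Gam (qs s)"
    using G' mem_Gam_level mem_Gam_iff_level_le by force
  moreover have "G' \<inter> Gam (qs s) \<subseteq> G' \<inter> Gam (qs (Suc s))"
    using Gam_mono[OF less_imp_le[OF \<open>qs s < qs (Suc s)\<close>]] by blast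
  ultimately show "G' \<inter> Gam (qs s) \<subset> G' \<inter> Gam (qs (Suc s))"
    by blast
  have "\<eta> \<in> G' \<inter> Gam (qs (level \<eta>))" if "\<eta> \<in> G'" for \<eta>
    using that G' mem_Gam_level Gam_mono[OF le_enumerate[OF levels]] unfolding qs_def by blast
  then show "(\<Union>s. G' \<inter> Gam (qs s)) = G'"
    by blast
qed

lemma BD_system_self_determined:
  assumes sd: "self_determined G Gam i G'"
  defines "qs \<equiv> enumerate {q. G' \<inter> Delta Gam q \<noteq> {}}"
  shows "BD_system G' (\<lambda>s. G' \<inter> Gam (qs s)) (\<lambda>s x. restr G' (i (qs s) x))"
proof -
  have G': "G' \<subseteq> G" "infinite G'"
    using sd unfolding self_determined_def by auto
  note enum = level_enumeration[OF G', folded qs_def]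
  have supp: "supported_on (Gam (qs s)) x" if "supported_on (G' \<inter> Gam (qs s)) x" for s x
    using that by (rule supported_on_mono) blast
  show ?thesis
    unfolding BD_system_def
  proof (intro conjI allI impI)
    fix s
    show "finite (G' \<inter> Gam (qs s))"
      using finite_Gam by blast
  next
    show "G' \<inter> Gam (qs s) \<noteq> {}" "G' \<inter> Gam (qs s) \<subset> G' \<inter> Gam (qs (Suc s))" for s
      by (fact enum(2,3))+
  next
    show "(\<Union>s. G' \<inter> Gam (qs s)) = G'"
      by (fact enum(4))
  next
    fix s x y
    assume "supported_on (G' \<inter> Gam (qs s)) x" "supported_on (G' \<inter> Gam (qs s)) y"
    then show "restr G' (i (qs s) (\<lambda>\<eta>. x \<eta> + y \<eta>)) =
        (\<lambda>\<eta>. restr G' (i (qs s) x) \<eta> + restr G' (i (qs s) y) \<eta>)"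
      using ext_add[OF supp supp] unfolding restr_def by auto
  next
    fix s x c
    assume "supported_on (G' \<inter> Gam (qs s)) x"
    then show "restr G' (i (qs s) (\<lambda>\<eta>. c * x \<eta>)) = (\<lambda>\<eta>. c * restr G' (i (qs s) x) \<eta>)"
      using ext_scale[OF supp] unfolding restr_def by auto
  next
    fix s x
    assume x: "supported_on (G' \<inter> Gam (qs s)) x"
    show "supported_on G' (restr G' (i (qs s) x))"
      by (rule supported_on_restr)
    show "bdd_fun (restr G' (i (qs s) x))"
      by (intro bdd_fun_restr ext_bdd supp x)
    show "\<forall>\<eta>\<in>G' \<inter> Gam (qs s). restr G' (i (qs s) x) \<eta> = x \<eta>"
      using ext_extends[OF supp[OF x]] unfolding restr_def by auto
  next
    fix s t x
    assume "s < t" and x: "supported_on (G' \<inter> Gam (qs s)) x"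
    have "restr G' (i (qs s) x) = restr G' (i (qs t) (restr (Gam (qs t)) (i (qs s) x)))"
      using ext_compat[OF strict_monoD[OF enum(1) \<open>s < t\<close>] supp[OF x]] by simp
    also have "\<dots> = restr G' (i (qs t) (restr G' (restr (Gam (qs t)) (i (qs s) x))))"
      by (rule restr_ext_restr[OF sd supported_on_restr])
    also have "restr G' (restr (Gam (qs t)) (i (qs s) x)) =
        restr (G' \<inter> Gam (qs t)) (restr G' (i (qs s) x))"
      unfolding restr_def by auto
    finally show "restr G' (i (qs s) x) =
        restr G' (i (qs t) (restr (G' \<inter> Gam (qs t)) (restr G' (i (qs s) x))))" .
  next
    show "bdd_above (range (\<lambda>s. opn (G' \<inter> Gam (qs s)) (\<lambda>x. restr G' (i (qs s) x))))"
      using opn_restr_ext_le_SUP by (intro bdd_aboveI2)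
  qed
qed

end

theorem proposition1p9:
  fixes G :: "'a set" and Gam :: "nat \<Rightarrow> 'a set"
    and i :: "nat \<Rightarrow> ('a \<Rightarrow> real) \<Rightarrow> ('a \<Rightarrow> real)" and G' :: "'a set"
  assumes "BD_system G Gam i"
    and "self_determined G Gam i G'"
  defines "qs \<equiv> enumerate {q. G' \<inter> Delta Gam q \<noteq> {}}"
  defines "Gam' \<equiv> (\<lambda>s. G' \<inter> Gam (qs s))"
  defines "i' \<equiv> (\<lambda>s x. restr G' (i (qs s) x))"
  shows "BD_system G' Gam' i' \<and>
         (SUP s. opn (Gam' s) (i' s)) \<le> (SUP q. opn (Gam q) (i q))"
proof
  interpret bourgain_delbaen G Gam i
    by (rule bourgain_delbaen.intro) (fact assms(1))
  show "BD_system G' Gam' i'"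
    unfolding Gam'_def i'_def qs_def by (rule BD_system_self_determined[OF assms(2)])
  show "(SUP s. opn (Gam' s) (i' s)) \<le> (SUP q. opn (Gam q) (i q))"
    unfolding Gam'_def i'_def by (rule cSUP_least) (auto intro: opn_restr_ext_le_SUP)
qed

end
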